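(* Let $\mathfrak g$ be a finite-dimensional real Lie algebra that has an abelian ideal of codimension one. Then $\mathfrak g$ admits an inner product with a geodesic basis, unless $\mathfrak g$ is isomorphic to $\mathcal A_n$ for some $n\ge1$.
   Context: For an inner product $\langle\cdot,\cdot\rangle$ on a real Lie algebra $\mathfrak g$, a nonzero $X\in\mathfrak g$ is a geodesic element if $\langle X,[X,Y]\rangle=0$ for all $Y\in\mathfrak g$; a geodesic basis is a basis consisting of geodesic elements. For $n\ge1$, $\mathcal A_n$ denotes the $(n+1)$-dimensional real Lie algebra with basis $\{Y,X_1,\dots,X_n\}$ and brackets $[Y,X_i]=X_i$, $[X_i,X_j]=0$. *)

theory Defs
  imports "HOL-Analysis.Analysis"
begin

text \<open>A finite-dimensional real Lie algebra is modelled as a finite-dimensional real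
vector space (a type of class euclidean_space; its built-in inner product is NOT used)
together with a bracket.\<close>

definition lie_bracket :: "('a::real_vector \<Rightarrow> 'a \<Rightarrow> 'a) \<Rightarrow> bool" where
  "lie_bracket B \<longleftrightarrow> bilinear B \<and> (\<forall>x. B x x = 0) \<and>
     (\<forall>x y z. B x (B y z) + B y (B z x) + B z (B x y) = 0)"

definition lie_ideal :: "('a::real_vector \<Rightarrow> 'a \<Rightarrow> 'a) \<Rightarrow> 'a set \<Rightarrow> bool" where
  "lie_ideal B I \<longleftrightarrow> subspace I \<and> (\<forall>x y. y \<in> I \<longrightarrow> B x y \<in> I)"

definition abelian_sub :: "('a::real_vector \<Rightarrow> 'a \<Rightarrow> 'a) \<Rightarrow> 'a set \<Rightarrow> bool" where
  "abelian_sub B I \<longleftrightarrow> (\<forall>x\<in>I. \<forall>y\<in>I. B x y = 0)"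

definition inner_prod :: "('a::real_vector \<Rightarrow> 'a \<Rightarrow> real) \<Rightarrow> bool" where
  "inner_prod ip \<longleftrightarrow> bilinear ip \<and> (\<forall>x y. ip x y = ip y x) \<and> (\<forall>x. x \<noteq> 0 \<longrightarrow> ip x x > 0)"

definition geodesic_elem ::
  "('a::real_vector \<Rightarrow> 'a \<Rightarrow> 'a) \<Rightarrow> ('a \<Rightarrow> 'a \<Rightarrow> real) \<Rightarrow> 'a \<Rightarrow> bool" where
  "geodesic_elem B ip X \<longleftrightarrow> X \<noteq> 0 \<and> (\<forall>Y. ip X (B X Y) = 0)"

definition has_geodesic_basis ::
  "('a::real_vector \<Rightarrow> 'a \<Rightarrow> 'a) \<Rightarrow> ('a \<Rightarrow> 'a \<Rightarrow> real) \<Rightarrow> bool" where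
  "has_geodesic_basis B ip \<longleftrightarrow>
     (\<exists>S. independent S \<and> span S = UNIV \<and> (\<forall>X\<in>S. geodesic_elem B ip X))"

text \<open>(g,B) is isomorphic to A_n iff g has a basis Y, X_1, ..., X_n with
[Y,X_i] = X_i and [X_i,X_j] = 0 (the image of the standard basis of A_n under
a Lie algebra isomorphism; conversely such a basis defines an isomorphism).\<close>
definition iso_to_A :: "('a::real_vector \<Rightarrow> 'a \<Rightarrow> 'a) \<Rightarrow> nat \<Rightarrow> bool" where
  "iso_to_A B n \<longleftrightarrow> (\<exists>Y X. inj_on X {1..n} \<and> Y \<notin> X ` {1..n} \<and>
      independent (insert Y (X ` {1..n})) \<and> span (insert Y (X ` {1..n})) = UNIV \<and>
      (\<forall>i\<in>{1..n}. B Y (X i) = X i) \<and>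
      (\<forall>i\<in>{1..n}. \<forall>j\<in>{1..n}. B (X i) (X j) = 0))"

end

theory Submission
  imports Defs
begin

text \<open>Write \<open>g = \<real>Y \<oplus> I\<close> with \<open>Y\<close> orthogonal to the abelian ideal \<open>I\<close>. For any inner
product keeping \<open>Y \<perp> I\<close>, the element \<open>Y\<close> is geodesic, and \<open>x \<in> I\<close> is geodesic iff
\<open>\<langle>x, [Y,x]\<rangle> = 0\<close>. So it suffices that the null cone of the quadratic form
\<open>x \<mapsto> \<langle>x, [Y,x]\<rangle>\<close> spans \<open>I\<close>, which holds whenever this form is zero or indefinite.
If \<open>ad Y\<close> acts on \<open>I\<close> as a scalar \<open>\<lambda>\<close>, then \<open>\<lambda> \<noteq> 0\<close> means \<open>g \<cong> \<A>\<^sub>n\<close>, while \<open>\<lambda> = 0\<close>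
makes the form vanish. Otherwise some orthogonal \<open>u, r \<in> I\<close> have \<open>u \<bullet> [Y,r] \<noteq> 0\<close>, and the
inner product \<open>x \<bullet> y + k (x \<bullet> u) (y \<bullet> u)\<close> makes the form indefinite for large \<open>k\<close>.\<close>

lemma lie_bracket_antisym:
  assumes "lie_bracket B" shows "B x y = - B y x"
proof -
  have bl: "bilinear B" and alt: "\<And>z. B z z = 0" using assms by (auto simp: lie_bracket_def)
  have "0 = B (x + y) (x + y)" using alt by simp
  also have "\<dots> = B x x + B x y + B y x + B y y"
    by (simp add: bilinear_ladd[OF bl] bilinear_radd[OF bl])
  finally show ?thesis using alt by (simp add: eq_neg_iff_add_eq_0 add.assoc)
qed

lemma span_insert_subspace_decomp:
  assumes "subspace I" "span (insert Y I) = UNIV"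
  obtains t where "w - t *\<^sub>R Y \<in> I"
proof -
  have "w \<in> span (insert Y I)" using assms by simp
  then obtain t where "w - t *\<^sub>R Y \<in> span I" by (auto simp: span_insert)
  then show ?thesis using that assms by (metis span_eq_iff)
qed

lemma span_eq_UNIV_if_subset_span:
  assumes "span S = UNIV" "S \<subseteq> span T" shows "span T = UNIV"
  using assms by (metis span_minimal subspace_span top.extremum_uniqueI)

lemma has_geodesic_basis_if_null_cone_spans:
  fixes B :: "'a::real_vector \<Rightarrow> 'a \<Rightarrow> 'a" and ip :: "'a \<Rightarrow> 'a \<Rightarrow> real"
  assumes lb: "lie_bracket B" and ideal: "lie_ideal B I" and abel: "abelian_sub B I"
    and YI: "Y \<notin> I" and sp: "span (insert Y I) = UNIV"
    and bip: "bilinear ip" and orth: "\<forall>z\<in>I. ip Y z = 0"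
    and null: "I \<subseteq> span {z\<in>I. ip z (B Y z) = 0}"
  shows "has_geodesic_basis B ip"
proof -
  have bl: "bilinear B" and alt: "\<And>z. B z z = 0" using lb by (auto simp: lie_bracket_def)
  have sI: "subspace I" and into: "\<And>x y. y \<in> I \<Longrightarrow> B x y \<in> I"
    using ideal by (auto simp: lie_ideal_def)
  have bracket_decomp: "B x w = B x (w - t *\<^sub>R Y) + t *\<^sub>R B x Y" for x w t
  proof -
    have "w = (w - t *\<^sub>R Y) + t *\<^sub>R Y" by simp
    then show ?thesis by (metis bilinear_radd[OF bl] bilinear_rmul[OF bl])
  qed
  have geoY: "geodesic_elem B ip Y"
    unfolding geodesic_elem_def
  proof (intro conjI allI)
    show "Y \<noteq> 0" using YI sI subspace_0 by blast
    fix w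
    obtain t where "w - t *\<^sub>R Y \<in> I" using span_insert_subspace_decomp[OF sI sp] .
    then show "ip Y (B Y w) = 0" using bracket_decomp[of Y w t] alt into orth by simp
  qed
  have geoI: "geodesic_elem B ip x" if "x \<in> I" "x \<noteq> 0" "ip x (B Y x) = 0" for x
    unfolding geodesic_elem_def
  proof (intro conjI allI that(2))
    fix w
    obtain t where "w - t *\<^sub>R Y \<in> I" using span_insert_subspace_decomp[OF sI sp] .
    then have "B x w = - t *\<^sub>R B Y x"
      using bracket_decomp[of x w t] abel that(1) lie_bracket_antisym[OF lb, of x Y]
      by (simp add: abelian_sub_def)
    then show "ip x (B x w) = 0"
      using that(3) by (simp add: bilinear_rmul[OF bip] bilinear_rneg[OF bip])
  qed
  define G where "G = insert Y ({z\<in>I. ip z (B Y z) = 0} - {0})"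
  have geoG: "\<forall>X\<in>G. geodesic_elem B ip X" using geoY geoI unfolding G_def by auto
  have "insert Y I \<subseteq> span G"
  proof -
    have "span {z\<in>I. ip z (B Y z) = 0} = span ({z\<in>I. ip z (B Y z) = 0} - {0})" by simp
    also have "\<dots> \<subseteq> span G" by (rule span_mono) (auto simp: G_def)
    finally show ?thesis using null by (auto simp: G_def span_base)
  qed
  then have "span G = UNIV" using sp span_eq_UNIV_if_subset_span by blast
  obtain S where "S \<subseteq> G" "independent S" "G \<subseteq> span S"
    by (rule maximal_independent_subset)
  with \<open>span G = UNIV\<close> geoG show ?thesis
    unfolding has_geodesic_basis_def using span_eq_UNIV_if_subset_span by blast
qed

lemma quadratic_two_roots:
  fixes a b c :: real
  assumes "a * c < 0"
  obtains t1 t2 where "t1 \<noteq> t2" "c * t1\<^sup>2 + b * t1 + a = 0" "c * t2\<^sup>2 + b * t2 + a = 0"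
proof -
  have c0: "c \<noteq> 0" using assms by auto
  define D where "D = b\<^sup>2 - 4 * a * c"
  have "D > 0" using assms zero_le_power2[of b] unfolding D_def by linarith
  then have sD: "sqrt D > 0" and sq: "(sqrt D)\<^sup>2 = D" by simp_all
  have root: "c * t\<^sup>2 + b * t + a = 0" if "t = (- b + e) / (2 * c)" "e\<^sup>2 = D" for e t
  proof -
    have "4 * c * (c * t\<^sup>2 + b * t + a) = e\<^sup>2 - b\<^sup>2 + 4 * a * c"
      using c0 unfolding that(1) by (simp add: power2_eq_square field_simps)
    then show ?thesis using that(2) c0 by (simp add: D_def)
  qed
  have "(- b + sqrt D) / (2 * c) \<noteq> (- b + - sqrt D) / (2 * c)"
    using sD c0 by (simp add: divide_simps)
  moreover have "c * ((- b + sqrt D) / (2 * c))\<^sup>2 + b * ((- b + sqrt D) / (2 * c)) + a = 0"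
    by (rule root[of _ "sqrt D"]) (simp_all add: sq)
  moreover have "c * ((- b + - sqrt D) / (2 * c))\<^sup>2 + b * ((- b + - sqrt D) / (2 * c)) + a = 0"
    by (rule root[of _ "- sqrt D"]) (simp_all add: sq)
  ultimately show ?thesis by (rule that)
qed

lemma in_span_zeros_if_sign_change:
  fixes q :: "'a::real_vector \<Rightarrow> real"
  assumes sI: "subspace I" and x: "x \<in> I" and m: "m \<in> I"
    and expand: "\<And>t. q (x + t *\<^sub>R m) = q x + t * b + t\<^sup>2 * q m"
    and sign: "q x * q m < 0"
  shows "x \<in> span {z\<in>I. q z = 0}"
proof -
  let ?Z = "{z\<in>I. q z = 0}"
  obtain t1 t2 where t: "t1 \<noteq> t2" "q m * t1\<^sup>2 + b * t1 + q x = 0" "q m * t2\<^sup>2 + b * t2 + q x = 0"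
    using quadratic_two_roots[OF sign] .
  have zero: "x + t *\<^sub>R m \<in> span ?Z" if "q m * t\<^sup>2 + b * t + q x = 0" for t
    using expand[of t] that x m sI
    by (intro span_base) (auto simp: subspace_add subspace_scale algebra_simps)
  have "(x + t1 *\<^sub>R m) - (x + t2 *\<^sub>R m) \<in> span ?Z" using zero t(2,3) by (intro span_diff)
  then have "(t1 - t2) *\<^sub>R m \<in> span ?Z" by (simp add: scaleR_diff_left)
  then have "m \<in> span ?Z" using t(1) span_scale[of _ _ "1 / (t1 - t2)"] by fastforce
  then have "(x + t1 *\<^sub>R m) - t1 *\<^sub>R m \<in> span ?Z" using zero[OF t(2)] by (intro span_diff span_scale)
  then show ?thesis by simp
qed

text \<open>Here \<open>q\<close> is a quadratic form and \<open>b\<close> twice its polar form.\<close>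

lemma subset_span_zeros_if_indefinite:
  fixes q :: "'a::real_vector \<Rightarrow> real"
  assumes sI: "subspace I"
    and expand: "\<And>x m t. x \<in> I \<Longrightarrow> m \<in> I \<Longrightarrow> q (x + t *\<^sub>R m) = q x + t * b x m + t\<^sup>2 * q m"
    and indef: "(\<forall>x\<in>I. q x = 0) \<or> (\<exists>p\<in>I. \<exists>n\<in>I. q p > 0 \<and> q n < 0)"
  shows "I \<subseteq> span {z\<in>I. q z = 0}"
proof
  fix x assume x: "x \<in> I"
  show "x \<in> span {z\<in>I. q z = 0}"
  proof (cases "q x = 0")
    case True then show ?thesis using x by (auto intro: span_base)
  next
    case False
    then obtain p n where pn: "p \<in> I" "n \<in> I" "q p > 0" "q n < 0" using indef x by auto
    have "q x * q n < 0 \<or> q x * q p < 0"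
      using False pn(3,4) by (cases "q x > 0") (auto simp: mult_pos_neg mult_neg_pos)
    then show ?thesis
      using in_span_zeros_if_sign_change[OF sI x pn(2) expand[OF x pn(2)]]
        in_span_zeros_if_sign_change[OF sI x pn(1) expand[OF x pn(1)]] by blast
  qed
qed

definition rank_one_inner :: "real \<Rightarrow> 'a::real_inner \<Rightarrow> 'a \<Rightarrow> 'a \<Rightarrow> real" where
  "rank_one_inner k u x y = x \<bullet> y + k * ((x \<bullet> u) * (y \<bullet> u))"

lemma inner_prod_rank_one_inner:
  assumes "k \<ge> 0" shows "inner_prod (rank_one_inner k u)"
proof -
  have "linear (\<lambda>y. rank_one_inner k u x y)" "linear (\<lambda>x. rank_one_inner k u x y)" for x y
    by (rule linearI; simp add: rank_one_inner_def inner_add_right inner_add_left algebra_simps)+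
  then have "bilinear (rank_one_inner k u)" by (simp add: bilinear_def)
  moreover have "rank_one_inner k u x y = rank_one_inner k u y x" for x y
    unfolding rank_one_inner_def by (simp add: inner_commute mult.commute)
  moreover have "rank_one_inner k u x x > 0" if "x \<noteq> 0" for x
    using that assms by (simp add: rank_one_inner_def add_pos_nonneg)
  ultimately show ?thesis by (simp add: inner_prod_def)
qed

lemma rank_one_inner_quadratic_expand:
  assumes lin: "linear A"
  shows "rank_one_inner k u (x + t *\<^sub>R m) (A (x + t *\<^sub>R m)) = rank_one_inner k u x (A x)
      + t * (x \<bullet> A m + m \<bullet> A x + k * ((x \<bullet> u) * (A m \<bullet> u) + (m \<bullet> u) * (A x \<bullet> u)))
      + t\<^sup>2 * rank_one_inner k u m (A m)"
  by (simp add: rank_one_inner_def linear_add[OF lin] linear_scale[OF lin]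
      inner_add_left inner_add_right power2_eq_square algebra_simps)

text \<open>The vectors \<open>x s \<in> u + \<real> r\<close> below satisfy \<open>x s \<bullet> u = u \<bullet> u\<close> and
\<open>A (x s) \<bullet> u = s\<close>, so for \<open>s = \<pm>1\<close> the rank-one term contributes \<open>\<pm>k (u \<bullet> u)\<close>,
which dominates once \<open>k\<close> is large.\<close>

lemma rank_one_inner_indefinite:
  fixes A :: "'a::real_inner \<Rightarrow> 'a"
  assumes lin: "linear A" and sI: "subspace I"
    and u: "u \<in> I" and r: "r \<in> I" and ur: "u \<bullet> r = 0" and uAr: "u \<bullet> A r \<noteq> 0"
  obtains k where "k \<ge> 0"
    "\<exists>p\<in>I. \<exists>n\<in>I. rank_one_inner k u p (A p) > 0 \<and> rank_one_inner k u n (A n) < 0"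
proof -
  let ?c = "u \<bullet> A r"
  have uu: "u \<bullet> u > 0" using uAr by (cases "u = 0") auto
  define x where "x s = u + ((s - u \<bullet> A u) / ?c) *\<^sub>R r" for s
  have xI: "x s \<in> I" for s using u r sI by (simp add: x_def subspace_add subspace_scale)
  have ru: "r \<bullet> u = 0" using ur by (simp add: inner_commute)
  have xu: "x s \<bullet> u = u \<bullet> u" for s by (simp add: x_def inner_add_left ru)
  have Axu: "A (x s) \<bullet> u = s" for s
    using uAr by (simp add: x_def inner_add_left linear_add[OF lin] linear_scale[OF lin]
        inner_commute[of "A r" u] inner_commute[of "A u" u])
  define k where "k = (\<bar>x 1 \<bullet> A (x 1)\<bar> + \<bar>x (-1) \<bullet> A (x (-1))\<bar> + 1) / (u \<bullet> u)"
  have kuu: "k * (u \<bullet> u) = \<bar>x 1 \<bullet> A (x 1)\<bar> + \<bar>x (-1) \<bullet> A (x (-1))\<bar> + 1"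
    using uu by (simp add: k_def)
  have "rank_one_inner k u (x 1) (A (x 1)) > 0" "rank_one_inner k u (x (-1)) (A (x (-1))) < 0"
    using kuu by (simp_all add: rank_one_inner_def xu Axu)
  moreover have "k \<ge> 0" using uu by (simp add: k_def)
  ultimately show ?thesis using that xI by blast
qed

lemma eigenvector_if_orthogonal_preserved:
  fixes A :: "'a::real_inner \<Rightarrow> 'a"
  assumes lin: "linear A" and sI: "subspace I" and inv: "\<forall>z\<in>I. A z \<in> I"
    and orth: "\<forall>u\<in>I. \<forall>r\<in>I. u \<bullet> r = 0 \<longrightarrow> u \<bullet> A r = 0"
    and r: "r \<in> I"
  shows "A r = ((r \<bullet> A r) / (r \<bullet> r)) *\<^sub>R r"
proof (cases "r = 0")
  case True then show ?thesis using linear_0[OF lin] by simp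
next
  case False
  define v where "v = A r - ((r \<bullet> A r) / (r \<bullet> r)) *\<^sub>R r"
  have "v \<in> I" using inv r sI by (simp add: v_def subspace_diff subspace_scale)
  moreover have vr: "v \<bullet> r = 0"
    using False by (simp add: v_def inner_diff_left inner_commute[of "A r" r])
  ultimately have "v \<bullet> A r = 0" using orth r by blast
  then have "v \<bullet> v = 0" using vr by (simp add: v_def inner_diff_right inner_commute)
  then show ?thesis by (simp add: v_def)
qed

lemma eigenvalues_eq_if_sum_eigenvector:
  fixes A :: "'a::real_vector \<Rightarrow> 'a"
  assumes lin: "linear A" and "A r = a *\<^sub>R r" "A s = b *\<^sub>R s" "A (r + s) = m *\<^sub>R (r + s)"
    and "r \<noteq> 0" "s \<noteq> 0"
  shows "a = b"
proof -
  have e: "(a - m) *\<^sub>R r = (m - b) *\<^sub>R s"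
    using assms(2-4) linear_add[OF lin, of r s] by (simp add: algebra_simps)
  show ?thesis
  proof (cases "a = m")
    case True then show ?thesis using e assms(6) by simp
  next
    case False
    then have rs: "r = ((m - b) / (a - m)) *\<^sub>R s"
      using e by (metis (no_types, lifting) divide_inverse eq_vector_fraction_iff right_minus_eq scaleR_scaleR)
    then have "A r = b *\<^sub>R r"
      using assms(3) linear_scale[OF lin] by (metis scaleR_scaleR mult.commute)
    then have "(a - b) *\<^sub>R r = 0" using assms(2) by (simp add: algebra_simps)
    then show ?thesis using assms(5) by simp
  qed
qed

lemma scalar_if_orthogonal_preserved:
  fixes A :: "'a::real_inner \<Rightarrow> 'a"
  assumes lin: "linear A" and sI: "subspace I" and inv: "\<forall>z\<in>I. A z \<in> I"
    and orth: "\<forall>u\<in>I. \<forall>r\<in>I. u \<bullet> r = 0 \<longrightarrow> u \<bullet> A r = 0"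
  obtains l where "\<forall>z\<in>I. A z = l *\<^sub>R z"
proof (cases "I \<subseteq> {0}")
  case True then show ?thesis using that[of 0] linear_0[OF lin] by auto
next
  case False
  then obtain r0 where r0: "r0 \<in> I" "r0 \<noteq> 0" by blast
  define lam where "lam z = (z \<bullet> A z) / (z \<bullet> z)" for z
  have eig: "A z = lam z *\<^sub>R z" if "z \<in> I" for z
    using eigenvector_if_orthogonal_preserved[OF lin sI inv orth that] by (simp add: lam_def)
  have "A z = lam r0 *\<^sub>R z" if z: "z \<in> I" for z
  proof (cases "z = 0")
    case True then show ?thesis using linear_0[OF lin] by simp
  next
    case False
    have "z + r0 \<in> I" using z r0 sI by (simp add: subspace_add)
    then have "lam z = lam r0"
      using eigenvalues_eq_if_sum_eigenvector[OF lin eig[OF z] eig[OF r0(1)] eig False r0(2)]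
      by blast
    then show ?thesis using eig[OF z] by simp
  qed
  then show ?thesis using that by blast
qed

lemma exists_rank_one_inner_null_cone_spans:
  fixes A :: "'a::real_inner \<Rightarrow> 'a"
  assumes lin: "linear A" and sI: "subspace I" and inv: "\<forall>z\<in>I. A z \<in> I"
    and not_scalar: "\<And>l. \<forall>z\<in>I. A z = l *\<^sub>R z \<Longrightarrow> l = 0 \<or> I = {0}"
  obtains k u where "k \<ge> 0" "u \<in> I" "I \<subseteq> span {z\<in>I. rank_one_inner k u z (A z) = 0}"
proof -
  have "\<exists>k u. k \<ge> 0 \<and> u \<in> I \<and> ((\<forall>x\<in>I. rank_one_inner k u x (A x) = 0) \<or>
      (\<exists>p\<in>I. \<exists>n\<in>I. rank_one_inner k u p (A p) > 0 \<and> rank_one_inner k u n (A n) < 0))"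
  proof (cases "\<exists>u\<in>I. \<exists>r\<in>I. u \<bullet> r = 0 \<and> u \<bullet> A r \<noteq> 0")
    case True
    then obtain u r where "u \<in> I" "r \<in> I" "u \<bullet> r = 0" "u \<bullet> A r \<noteq> 0" by blast
    with rank_one_inner_indefinite[OF lin sI] show ?thesis by metis
  next
    case False
    then obtain l where l: "\<forall>z\<in>I. A z = l *\<^sub>R z"
      using scalar_if_orthogonal_preserved[OF lin sI inv] by blast
    then have "\<forall>x\<in>I. rank_one_inner 0 0 x (A x) = 0"
      using not_scalar[OF l] by (auto simp: rank_one_inner_def)
    then show ?thesis using sI subspace_0 by blast
  qed
  then show ?thesis
    using that subset_span_zeros_if_indefinite[OF sI rank_one_inner_quadratic_expand[OF lin]]
    by blast
qed

text \<open>If \<open>ad Y\<close> acts on \<open>I\<close> as \<open>l \<noteq> 0\<close>, then \<open>Y / l\<close> and a basis of \<open>I\<close> are the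
standard basis of \<open>\<A>\<^sub>n\<close> with \<open>n = dim I\<close>.\<close>

lemma iso_to_A_if_ad_scalar:
  fixes B :: "'a::euclidean_space \<Rightarrow> 'a \<Rightarrow> 'a"
  assumes lb: "lie_bracket B" and sI: "subspace I" and abel: "abelian_sub B I"
    and YI: "Y \<notin> I" and sp: "span (insert Y I) = UNIV"
    and l: "l \<noteq> 0" and ad: "\<forall>z\<in>I. B Y z = l *\<^sub>R z"
  shows "iso_to_A B (dim I)"
proof -
  have bl: "bilinear B" using lb by (simp add: lie_bracket_def)
  obtain Bs where Bs: "Bs \<subseteq> I" "independent Bs" "I \<subseteq> span Bs" "card Bs = dim I"
    by (rule basis_exists)
  have spBs: "span Bs = I" using span_minimal[OF Bs(1) sI] Bs(3) by blast
  obtain h where h: "bij_betw h {1..dim I} Bs"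
    using ex_bij_betw_nat_finite_1[OF finiteI_independent[OF Bs(2)]] Bs(4) by auto
  then have himg: "h ` {1..dim I} = Bs" by (simp add: bij_betw_def)
  then have hI: "h i \<in> I" if "i \<in> {1..dim I}" for i using that Bs(1) by blast
  define Y' where "Y' = (1 / l) *\<^sub>R Y"
  have Y'I: "Y' \<notin> I"
  proof
    assume "Y' \<in> I"
    then have "l *\<^sub>R Y' \<in> I" using sI by (simp add: subspace_scale)
    then show False using YI l by (simp add: Y'_def)
  qed
  have "insert Y I \<subseteq> span (insert Y' Bs)"
  proof -
    have "Y = l *\<^sub>R Y'" using l by (simp add: Y'_def)
    then have "Y \<in> span (insert Y' Bs)" by (simp add: span_base span_scale)
    moreover have "I \<subseteq> span (insert Y' Bs)" using spBs span_mono[of Bs "insert Y' Bs"] by blast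
    ultimately show ?thesis by blast
  qed
  then show ?thesis
    unfolding iso_to_A_def
  proof (intro exI[of _ Y'] exI[of _ h] conjI ballI)
    show "inj_on h {1..dim I}" using h by (simp add: bij_betw_def)
    show "Y' \<notin> h ` {1..dim I}" using himg Bs(1) Y'I by blast
    show "independent (insert Y' (h ` {1..dim I}))"
      using himg Bs(2) Y'I spBs by (simp add: independent_insertI)
    show "span (insert Y' (h ` {1..dim I})) = UNIV"
      if "insert Y I \<subseteq> span (insert Y' Bs)"
      using span_eq_UNIV_if_subset_span[OF sp that] himg by simp
    show "B Y' (h i) = h i" if "i \<in> {1..dim I}" for i
      using ad hI[OF that] l by (simp add: Y'_def bilinear_lmul[OF bl])
    show "B (h i) (h j) = 0" if "i \<in> {1..dim I}" "j \<in> {1..dim I}" for i j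
      using abel hI[OF that(1)] hI[OF that(2)] by (simp add: abelian_sub_def)
  qed
qed

lemma codim_one_orthogonal_complement:
  fixes I :: "'a::euclidean_space set"
  assumes sI: "subspace I" and codim: "dim I + 1 = DIM('a)"
  obtains Y where "Y \<notin> I" "\<forall>z\<in>I. Y \<bullet> z = 0" "span (insert Y I) = UNIV"
proof -
  have spI: "span I = I" using sI by simp
  have "dim I < DIM('a)" using codim by simp
  then obtain Y where "Y \<noteq> 0" and "\<And>z. z \<in> span I \<Longrightarrow> orthogonal Y z"
    using orthogonal_to_subspace_exists by metis
  then have orth: "\<forall>z\<in>I. Y \<bullet> z = 0" unfolding spI orthogonal_def by blast
  have YI: "Y \<notin> I"
  proof
    assume "Y \<in> I"
    then have "Y \<bullet> Y = 0" using orth by blast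
    then show False using \<open>Y \<noteq> 0\<close> by simp
  qed
  then have "dim (insert Y I) = DIM('a)" using codim by (simp add: dim_insert spI)
  then have "span (insert Y I) = UNIV" by (simp add: dim_eq_full)
  with YI orth show ?thesis by (rule that)
qed

theorem theorem1p3:
  fixes B :: "'a::euclidean_space \<Rightarrow> 'a \<Rightarrow> 'a"
  assumes "lie_bracket B"
    and "\<exists>I. lie_ideal B I \<and> abelian_sub B I \<and> dim I + 1 = DIM('a)"
    and "\<not> (\<exists>n\<ge>1. iso_to_A B n)"
  shows "\<exists>ip. inner_prod ip \<and> has_geodesic_basis B ip"
proof -
  obtain I where ideal: "lie_ideal B I" and abel: "abelian_sub B I" and codim: "dim I + 1 = DIM('a)"
    using assms(2) by blast
  have sI: "subspace I" and inv: "\<And>Y. \<forall>z\<in>I. B Y z \<in> I"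
    using ideal by (simp_all add: lie_ideal_def)
  obtain Y where YI: "Y \<notin> I" and Y_orth: "\<forall>z\<in>I. Y \<bullet> z = 0" and sp: "span (insert Y I) = UNIV"
    using codim_one_orthogonal_complement[OF sI codim] .
  have lin: "linear (B Y)" using assms(1) by (simp add: lie_bracket_def bilinear_def)
  have not_scalar: "l = 0 \<or> I = {0}" if "\<forall>z\<in>I. B Y z = l *\<^sub>R z" for l
  proof (rule ccontr)
    assume "\<not> (l = 0 \<or> I = {0})"
    then have "iso_to_A B (dim I)" and "dim I \<noteq> 0"
      using iso_to_A_if_ad_scalar[OF assms(1) sI abel YI sp _ that] sI subspace_0 by fastforce+
    then show False using assms(3) by (metis less_one not_le)
  qed
  obtain k u where "k \<ge> 0" "u \<in> I" "I \<subseteq> span {z\<in>I. rank_one_inner k u z (B Y z) = 0}"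
    using exists_rank_one_inner_null_cone_spans[OF lin sI inv not_scalar] .
  moreover have "\<forall>z\<in>I. rank_one_inner k u Y z = 0"
    using Y_orth \<open>u \<in> I\<close> by (simp add: rank_one_inner_def)
  moreover have ip: "inner_prod (rank_one_inner k u)"
    using inner_prod_rank_one_inner \<open>k \<ge> 0\<close> .
  ultimately have "has_geodesic_basis B (rank_one_inner k u)"
    using has_geodesic_basis_if_null_cone_spans[OF assms(1) ideal abel YI sp]
    by (simp add: inner_prod_def)
  with ip show ?thesis by blast
qed

end
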